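(* Let $\Omega$ be a semigroup and $\mathcal{O}=(\{\mathcal{O}(n)\}_{n\ge1},\circ_i,\mathds{1})$ a nonsymmetric operad. For $n\ge1$ let $\mathcal{O}^\Omega(n)$ be the $\mathbf{k}$-module of collections $f=\{f_{\alpha_1,\dots,\alpha_n}\in\mathcal{O}(n)\}_{\alpha_1,\dots,\alpha_n\in\Omega}$ labelled by $\Omega^{\times n}$, and for $f\in\mathcal{O}^\Omega(m)$, $g\in\mathcal{O}^\Omega(n)$, $1\le i\le m$ define $(f\circ_i^\Omega g)_{\alpha_1,\dots,\alpha_{m+n-1}}=f_{\alpha_1,\dots,\alpha_{i-1},\,\alpha_i\alpha_{i+1}\cdots\alpha_{i+n-1},\,\alpha_{i+n},\dots,\alpha_{m+n-1}}\circ_i g_{\alpha_i,\dots,\alpha_{i+n-1}}$. Let $\mathds{1}\in\mathcal{O}^\Omega(1)$ be the collection with $\mathds{1}_\alpha=\mathds{1}$ for all $\alpha\in\Omega$. Then $\mathcal{O}^\Omega=(\{\mathcal{O}^\Omega(n)\}_{n\ge1},\circ_i^\Omega,\mathds{1})$ is a nonsymmetric operad.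
   Context: $\mathbf{k}$ is a commutative unital ring of characteristic $0$; $\Omega$ is a semigroup (not necessarily commutative or unital) with product written by juxtaposition. A nonsymmetric operad consists of $\mathbf{k}$-modules $\mathcal{O}(n)$, $n\ge1$, bilinear partial compositions $\circ_i:\mathcal{O}(m)\otimes\mathcal{O}(n)\to\mathcal{O}(m+n-1)$ ($1\le i\le m$) and $\mathds{1}\in\mathcal{O}(1)$ with $(f\circ_i g)\circ_{i+j-1}h=f\circ_i(g\circ_j h)$ ($1\le j\le n$), $(f\circ_i g)\circ_{j+n-1}h=(f\circ_j h)\circ_i g$ ($i<j$), and $f\circ_i\mathds{1}=\mathds{1}\circ_1 f=f$. *)

theory Defs
  imports Main "HOL-Library.Function_Algebras"
begin

definition kmodule :: "('k::comm_ring_1 \<Rightarrow> 'v::ab_group_add \<Rightarrow> 'v) \<Rightarrow> 'v set \<Rightarrow> bool" where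
  "kmodule sm A \<longleftrightarrow>
     0 \<in> A \<and> (\<forall>x\<in>A. \<forall>y\<in>A. x + y \<in> A) \<and> (\<forall>x\<in>A. - x \<in> A) \<and>
     (\<forall>c. \<forall>x\<in>A. sm c x \<in> A) \<and>
     (\<forall>a b. \<forall>x\<in>A. sm (a + b) x = sm a x + sm b x) \<and>
     (\<forall>a. \<forall>x\<in>A. \<forall>y\<in>A. sm a (x + y) = sm a x + sm a y) \<and>
     (\<forall>a b. \<forall>x\<in>A. sm (a * b) x = sm a (sm b x)) \<and>
     (\<forall>x\<in>A. sm 1 x = x)"

definition ns_operad ::
  "('k::comm_ring_1 \<Rightarrow> 'v::ab_group_add \<Rightarrow> 'v) \<Rightarrow> (nat \<Rightarrow> 'v set)
   \<Rightarrow> (nat \<Rightarrow> nat \<Rightarrow> nat \<Rightarrow> 'v \<Rightarrow> 'v \<Rightarrow> 'v) \<Rightarrow> 'v \<Rightarrow> bool" where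
  "ns_operad sm Op cmp u \<longleftrightarrow>
     (\<forall>n\<ge>1. kmodule sm (Op n)) \<and>
     (\<forall>m n i f g. 1 \<le> n \<and> 1 \<le> i \<and> i \<le> m \<and> f \<in> Op m \<and> g \<in> Op n \<longrightarrow>
        cmp m n i f g \<in> Op (m + n - 1)) \<and>
     (\<forall>m n i f f' g c. 1 \<le> n \<and> 1 \<le> i \<and> i \<le> m \<and> f \<in> Op m \<and> f' \<in> Op m \<and> g \<in> Op n \<longrightarrow>
        cmp m n i (f + f') g = cmp m n i f g + cmp m n i f' g \<and>
        cmp m n i (sm c f) g = sm c (cmp m n i f g)) \<and>
     (\<forall>m n i f g g' c. 1 \<le> n \<and> 1 \<le> i \<and> i \<le> m \<and> f \<in> Op m \<and> g \<in> Op n \<and> g' \<in> Op n \<longrightarrow>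
        cmp m n i f (g + g') = cmp m n i f g + cmp m n i f g' \<and>
        cmp m n i f (sm c g) = sm c (cmp m n i f g)) \<and>
     (\<forall>m n p i j f g h. 1 \<le> i \<and> i \<le> m \<and> 1 \<le> j \<and> j \<le> n \<and> 1 \<le> p \<and>
        f \<in> Op m \<and> g \<in> Op n \<and> h \<in> Op p \<longrightarrow>
        cmp (m + n - 1) p (i + j - 1) (cmp m n i f g) h = cmp m (n + p - 1) i f (cmp n p j g h)) \<and>
     (\<forall>m n p i j f g h. 1 \<le> i \<and> i < j \<and> j \<le> m \<and> 1 \<le> n \<and> 1 \<le> p \<and>
        f \<in> Op m \<and> g \<in> Op n \<and> h \<in> Op p \<longrightarrow>
        cmp (m + n - 1) p (j + n - 1) (cmp m n i f g) h = cmp (m + p - 1) n i (cmp m p j f h) g) \<and>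
     u \<in> Op 1 \<and>
     (\<forall>m i f. 1 \<le> i \<and> i \<le> m \<and> f \<in> Op m \<longrightarrow> cmp m 1 i f u = f) \<and>
     (\<forall>m f. 1 \<le> m \<and> f \<in> Op m \<longrightarrow> cmp 1 m 1 u f = f)"

fun prod_ne :: "'w::semigroup_mult list \<Rightarrow> 'w" where
  "prod_ne [] = undefined"
| "prod_ne [a] = a"
| "prod_ne (a # b # xs) = a * prod_ne (b # xs)"

text \<open>Op^\<Omega>(n): collections labelled by words of length n over \<Omega>
  (extended by 0 on words of other lengths).\<close>
definition OmegaO :: "(nat \<Rightarrow> 'v::ab_group_add set) \<Rightarrow> nat \<Rightarrow> ('w list \<Rightarrow> 'v) set" where
  "OmegaO Op n = {f. (\<forall>xs. length xs = n \<longrightarrow> f xs \<in> Op n) \<and> (\<forall>xs. length xs \<noteq> n \<longrightarrow> f xs = 0)}"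

definition OmegaSmult :: "('k \<Rightarrow> 'v \<Rightarrow> 'v) \<Rightarrow> 'k \<Rightarrow> ('w list \<Rightarrow> 'v) \<Rightarrow> ('w list \<Rightarrow> 'v)" where
  "OmegaSmult sm c f = (\<lambda>xs. sm c (f xs))"

definition OmegaComp ::
  "(nat \<Rightarrow> nat \<Rightarrow> nat \<Rightarrow> 'v \<Rightarrow> 'v \<Rightarrow> 'v) \<Rightarrow> nat \<Rightarrow> nat \<Rightarrow> nat
   \<Rightarrow> ('w::semigroup_mult list \<Rightarrow> 'v::ab_group_add) \<Rightarrow> ('w list \<Rightarrow> 'v) \<Rightarrow> ('w list \<Rightarrow> 'v)" where
  "OmegaComp cmp m n i f g = (\<lambda>as.
     if length as = m + n - 1 then
       cmp m n i
         (f (take (i - 1) as @ [prod_ne (take n (drop (i - 1) as))] @ drop (i - 1 + n) as))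
         (g (take n (drop (i - 1) as)))
     else 0)"

definition OmegaUnit :: "'v::ab_group_add \<Rightarrow> ('w list \<Rightarrow> 'v)" where
  "OmegaUnit u = (\<lambda>as. if length as = 1 then u else 0)"

end

theory Submission
  imports Defs
begin

(* On a word of length m + n - 1, the composite of f and g at i evaluates g on the block of
   n letters starting at position i, and f on the word in which that block is collapsed to
   its product in \<Omega>.  Closure, linearity and the unit laws are therefore inherited from O
   word by word.  For the two associativity laws one cuts the word into five blocks; both
   sides become the corresponding law of O applied to the same values of f, g and h.  The
   only new point is that collapsing an inner block and then the block containing it yields
   the same letter as collapsing the outer block at once, which is associativity in \<Omega>. *)

lemma prod_ne_Cons: "xs \<noteq> [] \<Longrightarrow> prod_ne (a # xs) = a * prod_ne xs"
  by (cases xs) auto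

lemma prod_ne_append:
  "xs \<noteq> [] \<Longrightarrow> ys \<noteq> [] \<Longrightarrow> prod_ne (xs @ ys) = prod_ne xs * prod_ne ys"
proof (induction xs rule: prod_ne.induct)
  case (3 a b xs)
  then show ?case by (simp add: mult.assoc)
qed (auto simp: prod_ne_Cons)

lemma prod_ne_collapse:
  "ys \<noteq> [] \<Longrightarrow> prod_ne (xs @ prod_ne ys # zs) = prod_ne (xs @ ys @ zs)"
  by (cases "xs = []"; cases "zs = []") (simp_all add: prod_ne_append prod_ne_Cons mult.assoc)

lemma length_eq_add3E:
  assumes "length xs = k\<^sub>1 + k\<^sub>2 + k\<^sub>3"
  obtains a b c where "xs = a @ b @ c" "length a = k\<^sub>1" "length b = k\<^sub>2" "length c = k\<^sub>3"
proof
  show "xs = take k\<^sub>1 xs @ take k\<^sub>2 (drop k\<^sub>1 xs) @ drop (k\<^sub>1 + k\<^sub>2) xs"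
    by (metis append_take_drop_id drop_drop add.commute)
qed (use assms in auto)

lemma kmodule_zero_mem: "kmodule sm A \<Longrightarrow> 0 \<in> A"
  unfolding kmodule_def by blast

lemma kmodule_smult_zero: "kmodule sm A \<Longrightarrow> sm c 0 = 0"
  unfolding kmodule_def by (metis add_cancel_right_right)

lemma kmodule_product:
  assumes "\<And>x. kmodule sm (B x)"
  shows "kmodule (\<lambda>c f x. sm c (f x)) {f. \<forall>x. f x \<in> B x}"
  using assms unfolding kmodule_def by (simp add: fun_eq_iff) blast

lemma kmodule_singleton_zero: "kmodule sm A \<Longrightarrow> kmodule sm {0}"
  using kmodule_smult_zero[of sm A] unfolding kmodule_def by auto

lemma ns_operadI:
  assumes "\<And>n. 1 \<le> n \<Longrightarrow> kmodule sm (Op n)"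
    and "\<And>m n i f g. \<lbrakk>1 \<le> n; 1 \<le> i; i \<le> m; f \<in> Op m; g \<in> Op n\<rbrakk>
           \<Longrightarrow> cmp m n i f g \<in> Op (m + n - 1)"
    and "\<And>m n i f f' g. \<lbrakk>1 \<le> n; 1 \<le> i; i \<le> m; f \<in> Op m; f' \<in> Op m; g \<in> Op n\<rbrakk>
           \<Longrightarrow> cmp m n i (f + f') g = cmp m n i f g + cmp m n i f' g"
    and "\<And>m n i f g c. \<lbrakk>1 \<le> n; 1 \<le> i; i \<le> m; f \<in> Op m; g \<in> Op n\<rbrakk>
           \<Longrightarrow> cmp m n i (sm c f) g = sm c (cmp m n i f g)"
    and "\<And>m n i f g g'. \<lbrakk>1 \<le> n; 1 \<le> i; i \<le> m; f \<in> Op m; g \<in> Op n; g' \<in> Op n\<rbrakk>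
           \<Longrightarrow> cmp m n i f (g + g') = cmp m n i f g + cmp m n i f g'"
    and "\<And>m n i f g c. \<lbrakk>1 \<le> n; 1 \<le> i; i \<le> m; f \<in> Op m; g \<in> Op n\<rbrakk>
           \<Longrightarrow> cmp m n i f (sm c g) = sm c (cmp m n i f g)"
    and "\<And>m n p i j f g h.
           \<lbrakk>1 \<le> i; i \<le> m; 1 \<le> j; j \<le> n; 1 \<le> p; f \<in> Op m; g \<in> Op n; h \<in> Op p\<rbrakk>
           \<Longrightarrow> cmp (m + n - 1) p (i + j - 1) (cmp m n i f g) h
             = cmp m (n + p - 1) i f (cmp n p j g h)"
    and "\<And>m n p i j f g h.
           \<lbrakk>1 \<le> i; i < j; j \<le> m; 1 \<le> n; 1 \<le> p; f \<in> Op m; g \<in> Op n; h \<in> Op p\<rbrakk>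
           \<Longrightarrow> cmp (m + n - 1) p (j + n - 1) (cmp m n i f g) h
             = cmp (m + p - 1) n i (cmp m p j f h) g"
    and "u \<in> Op 1"
    and "\<And>m i f. \<lbrakk>1 \<le> i; i \<le> m; f \<in> Op m\<rbrakk> \<Longrightarrow> cmp m 1 i f u = f"
    and "\<And>m f. \<lbrakk>1 \<le> m; f \<in> Op m\<rbrakk> \<Longrightarrow> cmp 1 m 1 u f = f"
  shows "ns_operad sm Op cmp u"
  using assms unfolding ns_operad_def by simp

lemma OmegaO_apply_mem: "0 \<in> Op n \<Longrightarrow> f \<in> OmegaO Op n \<Longrightarrow> f xs \<in> Op n"
  unfolding OmegaO_def by (cases "length xs = n") auto

lemma OmegaO_apply_eq_0: "f \<in> OmegaO Op n \<Longrightarrow> length xs \<noteq> n \<Longrightarrow> f xs = 0"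
  unfolding OmegaO_def by blast

lemma OmegaO_eq_pointwise: "OmegaO Op n = {f. \<forall>xs. f xs \<in> (if length xs = n then Op n else {0})}"
  unfolding OmegaO_def by auto

lemma kmodule_OmegaO:
  assumes "kmodule sm (Op n)"
  shows "kmodule (OmegaSmult sm) (OmegaO Op n)"
  unfolding OmegaO_eq_pointwise OmegaSmult_def
  by (rule kmodule_product) (use assms kmodule_singleton_zero in auto)

lemma OmegaComp_append:
  assumes "m = length a + 1 + length c" "n = length b" "i = length a + 1"
  shows "OmegaComp cmp m n i f g (a @ b @ c) = cmp m n i (f (a @ prod_ne b # c)) (g b)"
  using assms by (simp add: OmegaComp_def)

lemma OmegaComp_eq_0: "length xs \<noteq> m + n - 1 \<Longrightarrow> OmegaComp cmp m n i f g xs = 0"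
  by (simp add: OmegaComp_def)

context
  fixes sm :: "'k::comm_ring_1 \<Rightarrow> 'v::ab_group_add \<Rightarrow> 'v" and Op :: "nat \<Rightarrow> 'v set"
    and cmp :: "nat \<Rightarrow> nat \<Rightarrow> nat \<Rightarrow> 'v \<Rightarrow> 'v \<Rightarrow> 'v" and u :: 'v
  assumes operad: "ns_operad sm Op cmp u"
begin

lemma ns_operad_kmodule: "1 \<le> n \<Longrightarrow> kmodule sm (Op n)"
  using operad unfolding ns_operad_def by simp

lemma ns_operad_closed:
  "\<lbrakk>1 \<le> n; 1 \<le> i; i \<le> m; f \<in> Op m; g \<in> Op n\<rbrakk>
   \<Longrightarrow> cmp m n i f g \<in> Op (m + n - 1)"
  using operad unfolding ns_operad_def by simp

lemma ns_operad_add_left: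
  "\<lbrakk>1 \<le> n; 1 \<le> i; i \<le> m; f \<in> Op m; f' \<in> Op m; g \<in> Op n\<rbrakk>
   \<Longrightarrow> cmp m n i (f + f') g = cmp m n i f g + cmp m n i f' g"
  using operad unfolding ns_operad_def by simp

lemma ns_operad_smult_left:
  "\<lbrakk>1 \<le> n; 1 \<le> i; i \<le> m; f \<in> Op m; g \<in> Op n\<rbrakk>
   \<Longrightarrow> cmp m n i (sm c f) g = sm c (cmp m n i f g)"
  using operad unfolding ns_operad_def by simp

lemma ns_operad_add_right:
  "\<lbrakk>1 \<le> n; 1 \<le> i; i \<le> m; f \<in> Op m; g \<in> Op n; g' \<in> Op n\<rbrakk>
   \<Longrightarrow> cmp m n i f (g + g') = cmp m n i f g + cmp m n i f g'"
  using operad unfolding ns_operad_def by simp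

lemma ns_operad_smult_right:
  "\<lbrakk>1 \<le> n; 1 \<le> i; i \<le> m; f \<in> Op m; g \<in> Op n\<rbrakk>
   \<Longrightarrow> cmp m n i f (sm c g) = sm c (cmp m n i f g)"
  using operad unfolding ns_operad_def by simp

lemma ns_operad_assoc:
  "\<lbrakk>1 \<le> i; i \<le> m; 1 \<le> j; j \<le> n; 1 \<le> p; f \<in> Op m; g \<in> Op n; h \<in> Op p\<rbrakk>
   \<Longrightarrow> cmp (m + n - 1) p (i + j - 1) (cmp m n i f g) h
     = cmp m (n + p - 1) i f (cmp n p j g h)"
  using operad unfolding ns_operad_def by simp

lemma ns_operad_comm:
  "\<lbrakk>1 \<le> i; i < j; j \<le> m; 1 \<le> n; 1 \<le> p; f \<in> Op m; g \<in> Op n; h \<in> Op p\<rbrakk>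
   \<Longrightarrow> cmp (m + n - 1) p (j + n - 1) (cmp m n i f g) h
     = cmp (m + p - 1) n i (cmp m p j f h) g"
  using operad unfolding ns_operad_def by simp

lemma ns_operad_unit_mem: "u \<in> Op 1"
  using operad unfolding ns_operad_def by simp

lemma ns_operad_unit_right: "\<lbrakk>1 \<le> i; i \<le> m; f \<in> Op m\<rbrakk> \<Longrightarrow> cmp m 1 i f u = f"
  using operad unfolding ns_operad_def by simp

lemma ns_operad_unit_left: "\<lbrakk>1 \<le> m; f \<in> Op m\<rbrakk> \<Longrightarrow> cmp 1 m 1 u f = f"
  using operad unfolding ns_operad_def by simp

lemma ns_operad_smult_zero: "sm c 0 = 0"
  using ns_operad_kmodule[of 1] by (simp add: kmodule_smult_zero)

lemma OmegaO_mem: "1 \<le> n \<Longrightarrow> f \<in> OmegaO Op n \<Longrightarrow> f xs \<in> Op n"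
  by (blast intro: OmegaO_apply_mem kmodule_zero_mem ns_operad_kmodule)

lemma OmegaComp_closed:
  assumes "1 \<le> n" "1 \<le> i" "i \<le> m" "f \<in> OmegaO Op m" "g \<in> OmegaO Op n"
  shows "OmegaComp cmp m n i f g \<in> OmegaO Op (m + n - 1)"
proof -
  have "cmp m n i (f ys) (g zs) \<in> Op (m + n - 1)" for ys zs
    using assms by (intro ns_operad_closed OmegaO_mem) simp_all
  then show ?thesis
    by (simp add: OmegaO_def OmegaComp_def)
qed

lemma OmegaComp_add_left:
  assumes "1 \<le> n" "1 \<le> i" "i \<le> m" "f \<in> OmegaO Op m" "f' \<in> OmegaO Op m" "g \<in> OmegaO Op n"
  shows "OmegaComp cmp m n i (f + f') g = OmegaComp cmp m n i f g + OmegaComp cmp m n i f' g"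
  using assms by (simp add: OmegaComp_def fun_eq_iff ns_operad_add_left OmegaO_mem)

lemma OmegaComp_smult_left:
  assumes "1 \<le> n" "1 \<le> i" "i \<le> m" "f \<in> OmegaO Op m" "g \<in> OmegaO Op n"
  shows "OmegaComp cmp m n i (OmegaSmult sm c f) g = OmegaSmult sm c (OmegaComp cmp m n i f g)"
  using assms
  by (simp add: OmegaComp_def OmegaSmult_def fun_eq_iff
      ns_operad_smult_left ns_operad_smult_zero OmegaO_mem)

lemma OmegaComp_add_right:
  assumes "1 \<le> n" "1 \<le> i" "i \<le> m" "f \<in> OmegaO Op m" "g \<in> OmegaO Op n" "g' \<in> OmegaO Op n"
  shows "OmegaComp cmp m n i f (g + g') = OmegaComp cmp m n i f g + OmegaComp cmp m n i f g'"
  using assms by (simp add: OmegaComp_def fun_eq_iff ns_operad_add_right OmegaO_mem)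

lemma OmegaComp_smult_right:
  assumes "1 \<le> n" "1 \<le> i" "i \<le> m" "f \<in> OmegaO Op m" "g \<in> OmegaO Op n"
  shows "OmegaComp cmp m n i f (OmegaSmult sm c g) = OmegaSmult sm c (OmegaComp cmp m n i f g)"
  using assms
  by (simp add: OmegaComp_def OmegaSmult_def fun_eq_iff
      ns_operad_smult_right ns_operad_smult_zero OmegaO_mem)

lemma OmegaComp_assoc:
  assumes "1 \<le> i" "i \<le> m" "1 \<le> j" "j \<le> n" "1 \<le> p"
    and "f \<in> OmegaO Op m" "g \<in> OmegaO Op n" "h \<in> OmegaO Op p"
  shows "OmegaComp cmp (m + n - 1) p (i + j - 1) (OmegaComp cmp m n i f g) h
       = OmegaComp cmp m (n + p - 1) i f (OmegaComp cmp n p j g h)"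
proof
  fix xs
  show "OmegaComp cmp (m + n - 1) p (i + j - 1) (OmegaComp cmp m n i f g) h xs
      = OmegaComp cmp m (n + p - 1) i f (OmegaComp cmp n p j g h) xs"
  proof (cases "length xs = (i - 1) + ((j - 1) + p + (n - j)) + (m - i)")
    case True
    then obtain a w e where xs: "xs = a @ w @ e"
      and "length a = i - 1" "length w = (j - 1) + p + (n - j)" "length e = m - i"
      by (rule length_eq_add3E)
    from \<open>length w = _\<close> obtain b c d where w: "w = b @ c @ d"
      and "length b = j - 1" "length c = p" "length d = n - j"
      by (rule length_eq_add3E)
    define c' where "c' = prod_ne c"
    have shape: "m + n - 1 = length (a @ b) + 1 + length (d @ e)" "p = length c"
      "i + j - 1 = length (a @ b) + 1" "m = length a + 1 + length e" "n = length (b @ c' # d)"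
      "i = length a + 1" "n + p - 1 = length (b @ c @ d)"
      "n = length b + 1 + length d" "j = length b + 1"
      using assms \<open>length a = _\<close> \<open>length b = _\<close> \<open>length c = _\<close>
        \<open>length d = _\<close> \<open>length e = _\<close>
      by auto
    then have "prod_ne (b @ c' # d) = prod_ne (b @ c @ d)"
      unfolding c'_def using assms by (intro prod_ne_collapse) auto
    then have "OmegaComp cmp (m + n - 1) p (i + j - 1) (OmegaComp cmp m n i f g) h xs
      = cmp (m + n - 1) p (i + j - 1)
          (cmp m n i (f (a @ prod_ne (b @ c @ d) # e)) (g (b @ c' # d))) (h c)"
      using OmegaComp_append[OF shape(1-3), of cmp "OmegaComp cmp m n i f g" h]
        OmegaComp_append[OF shape(4-6), of cmp f g]
      by (simp add: xs w c'_def)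
    also have "\<dots> = cmp m (n + p - 1) i
        (f (a @ prod_ne (b @ c @ d) # e)) (cmp n p j (g (b @ c' # d)) (h c))"
      using assms by (intro ns_operad_assoc) (simp_all add: OmegaO_mem)
    also have "\<dots> = OmegaComp cmp m (n + p - 1) i f (OmegaComp cmp n p j g h) xs"
      using OmegaComp_append[OF shape(4,7,6), of cmp f "OmegaComp cmp n p j g h"]
        OmegaComp_append[OF shape(8,2,9), of cmp g h]
      by (simp add: xs w c'_def)
    finally show ?thesis .
  next
    case False
    then show ?thesis
      using assms by (simp add: OmegaComp_eq_0)
  qed
qed

lemma OmegaComp_comm:
  assumes "1 \<le> i" "i < j" "j \<le> m" "1 \<le> n" "1 \<le> p"
    and "f \<in> OmegaO Op m" "g \<in> OmegaO Op n" "h \<in> OmegaO Op p"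
  shows "OmegaComp cmp (m + n - 1) p (j + n - 1) (OmegaComp cmp m n i f g) h
       = OmegaComp cmp (m + p - 1) n i (OmegaComp cmp m p j f h) g"
proof
  fix xs
  show "OmegaComp cmp (m + n - 1) p (j + n - 1) (OmegaComp cmp m n i f g) h xs
      = OmegaComp cmp (m + p - 1) n i (OmegaComp cmp m p j f h) g xs"
  proof (cases "length xs = (i - 1) + n + ((j - i - 1) + p + (m - j))")
    case True
    then obtain a b w where xs: "xs = a @ b @ w"
      and "length a = i - 1" "length b = n" "length w = (j - i - 1) + p + (m - j)"
      by (rule length_eq_add3E)
    from \<open>length w = _\<close> obtain c d e where w: "w = c @ d @ e"
      and "length c = j - i - 1" "length d = p" "length e = m - j"
      by (rule length_eq_add3E)
    define b' where "b' = prod_ne b"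
    define d' where "d' = prod_ne d"
    have shape: "m + n - 1 = length (a @ b @ c) + 1 + length e" "p = length d"
      "j + n - 1 = length (a @ b @ c) + 1" "m = length a + 1 + length (c @ d' # e)" "n = length b"
      "i = length a + 1" "m + p - 1 = length a + 1 + length (c @ d @ e)"
      "m = length (a @ b' # c) + 1 + length e" "j = length (a @ b' # c) + 1"
      using assms \<open>length a = _\<close> \<open>length b = _\<close> \<open>length c = _\<close>
        \<open>length d = _\<close> \<open>length e = _\<close>
      by auto
    have "OmegaComp cmp (m + n - 1) p (j + n - 1) (OmegaComp cmp m n i f g) h xs
      = cmp (m + n - 1) p (j + n - 1) (cmp m n i (f (a @ b' # c @ d' # e)) (g b)) (h d)"
      using OmegaComp_append[OF shape(1-3), of cmp "OmegaComp cmp m n i f g" h]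
        OmegaComp_append[OF shape(4-6), of cmp f g]
      by (simp add: xs w b'_def d'_def)
    also have "\<dots> = cmp (m + p - 1) n i (cmp m p j (f (a @ b' # c @ d' # e)) (h d)) (g b)"
      using assms by (intro ns_operad_comm) (simp_all add: OmegaO_mem)
    also have "\<dots> = OmegaComp cmp (m + p - 1) n i (OmegaComp cmp m p j f h) g xs"
      using OmegaComp_append[OF shape(7,5,6), of cmp "OmegaComp cmp m p j f h" g]
        OmegaComp_append[OF shape(8,2,9), of cmp f h]
      by (simp add: xs w b'_def d'_def)
    finally show ?thesis .
  next
    case False
    then show ?thesis
      using assms by (simp add: OmegaComp_eq_0)
  qed
qed

lemma OmegaUnit_mem: "OmegaUnit u \<in> OmegaO Op 1"
  using ns_operad_unit_mem by (simp add: OmegaO_def OmegaUnit_def)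

lemma OmegaComp_unit_right:
  assumes "1 \<le> i" "i \<le> m" "f \<in> OmegaO Op m"
  shows "OmegaComp cmp m 1 i f (OmegaUnit u) = f"
proof
  fix xs
  show "OmegaComp cmp m 1 i f (OmegaUnit u) xs = f xs"
  proof (cases "length xs = (i - 1) + 1 + (m - i)")
    case True
    then obtain a y c where xs: "xs = a @ y @ c"
      and "length a = i - 1" "length y = 1" "length c = m - i"
      by (rule length_eq_add3E)
    from \<open>length y = 1\<close> obtain x where y: "y = [x]"
      by (cases y) auto
    have shape: "m = length a + 1 + length c" "1 = length y" "i = length a + 1"
      using assms \<open>length a = _\<close> \<open>length y = _\<close> \<open>length c = _\<close> by auto
    have "OmegaComp cmp m 1 i f (OmegaUnit u) xs = cmp m 1 i (f (a @ x # c)) u"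
      using OmegaComp_append[OF shape, of cmp f "OmegaUnit u"] by (simp add: xs y OmegaUnit_def)
    also have "\<dots> = f (a @ x # c)"
      using assms by (intro ns_operad_unit_right) (simp_all add: OmegaO_mem)
    finally show ?thesis
      by (simp add: xs y)
  next
    case False
    then show ?thesis
      using assms by (simp add: OmegaComp_eq_0 OmegaO_apply_eq_0)
  qed
qed

lemma OmegaComp_unit_left:
  assumes "1 \<le> m" "f \<in> OmegaO Op m"
  shows "OmegaComp cmp 1 m 1 (OmegaUnit u) f = f"
proof
  fix xs
  show "OmegaComp cmp 1 m 1 (OmegaUnit u) f xs = f xs"
  proof (cases "length xs = m")
    case True
    then have "OmegaComp cmp 1 m 1 (OmegaUnit u) f xs = cmp 1 m 1 u (f xs)"
      using OmegaComp_append[of 1 "[]" "[]" m xs 1 cmp] by (simp add: OmegaUnit_def)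
    also have "\<dots> = f xs"
      using assms by (intro ns_operad_unit_left) (simp_all add: OmegaO_mem)
    finally show ?thesis .
  next
    case False
    then show ?thesis
      using assms by (simp add: OmegaComp_eq_0 OmegaO_apply_eq_0)
  qed
qed

end

theorem theorem5p5:
  fixes sm :: "'k::{comm_ring_1, ring_char_0} \<Rightarrow> 'v::ab_group_add \<Rightarrow> 'v"
    and Op :: "nat \<Rightarrow> 'v set"
    and cmp :: "nat \<Rightarrow> nat \<Rightarrow> nat \<Rightarrow> 'v \<Rightarrow> 'v \<Rightarrow> 'v"
    and u :: 'v
  assumes "ns_operad sm Op cmp u"
  shows "ns_operad (OmegaSmult sm) (OmegaO Op :: nat \<Rightarrow> ('w::semigroup_mult list \<Rightarrow> 'v) set)
           (OmegaComp cmp) (OmegaUnit u)"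
  by (intro ns_operadI kmodule_OmegaO ns_operad_kmodule[OF assms]
      OmegaComp_closed[OF assms] OmegaComp_add_left[OF assms] OmegaComp_smult_left[OF assms]
      OmegaComp_add_right[OF assms] OmegaComp_smult_right[OF assms]
      OmegaComp_assoc[OF assms] OmegaComp_comm[OF assms]
      OmegaUnit_mem[OF assms] OmegaComp_unit_right[OF assms] OmegaComp_unit_left[OF assms])

end
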